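(* Let $v_1,\ldots,v_n$ be a matching ordering of a tournament $G$. If $v$ is a vertex of $G$ with indegree $b$, then $v$ is one of $v_b$, $v_{b+1}$, $v_{b+2}$. Moreover, $v=v_b$ if and only if $v$ is the head of a backedge, $v=v_{b+2}$ if and only if $v$ is the tail of a backedge, and $v=v_{b+1}$ if and only if $v$ is not an end of any backedge.
   Context: A tournament is a finite, non-null, loopless directed graph in which for any two distinct vertices $u,v$ there is exactly one edge with both ends in $\{u,v\}$. The indegree of $v$ is the number of vertices $u$ with an edge from $u$ to $v$. Given an ordering $v_1,\dots,v_n$ of the vertices, a backedge is an edge from $v_j$ to $v_i$ with $j>i$ (tail $v_j$, head $v_i$); the ordering is a matching ordering if every vertex is the head or tail of at most one backedge. *)

theory Defs
  imports Main
begin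

definition tournament :: "'a set \<Rightarrow> ('a \<times> 'a) set \<Rightarrow> bool" where
  "tournament V E \<longleftrightarrow> finite V \<and> V \<noteq> {} \<and> E \<subseteq> V \<times> V \<and>
     (\<forall>u\<in>V. (u,u) \<notin> E) \<and>
     (\<forall>u\<in>V. \<forall>w\<in>V. u \<noteq> w \<longrightarrow> ((u,w) \<in> E \<longleftrightarrow> (w,u) \<notin> E))"

definition indegree :: "'a set \<Rightarrow> ('a \<times> 'a) set \<Rightarrow> 'a \<Rightarrow> nat" where
  "indegree V E x = card {u \<in> V. (u,x) \<in> E}"

definition is_ordering :: "'a set \<Rightarrow> (nat \<Rightarrow> 'a) \<Rightarrow> bool" where
  "is_ordering V v \<longleftrightarrow> bij_betw v {1..card V} V"

text \<open>Backedges, as pairs of positions (i,j): an edge from v_j (tail) to v_i (head) with j > i.\<close>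
definition backedges :: "'a set \<Rightarrow> ('a \<times> 'a) set \<Rightarrow> (nat \<Rightarrow> 'a) \<Rightarrow> (nat \<times> nat) set" where
  "backedges V E v = {(i,j). 1 \<le> i \<and> i < j \<and> j \<le> card V \<and> (v j, v i) \<in> E}"

definition is_head_of_backedge :: "'a set \<Rightarrow> ('a \<times> 'a) set \<Rightarrow> (nat \<Rightarrow> 'a) \<Rightarrow> nat \<Rightarrow> bool" where
  "is_head_of_backedge V E v k \<longleftrightarrow> (\<exists>j. (k,j) \<in> backedges V E v)"

definition is_tail_of_backedge :: "'a set \<Rightarrow> ('a \<times> 'a) set \<Rightarrow> (nat \<Rightarrow> 'a) \<Rightarrow> nat \<Rightarrow> bool" where
  "is_tail_of_backedge V E v k \<longleftrightarrow> (\<exists>i. (i,k) \<in> backedges V E v)"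

definition matching_ordering :: "'a set \<Rightarrow> ('a \<times> 'a) set \<Rightarrow> (nat \<Rightarrow> 'a) \<Rightarrow> bool" where
  "matching_ordering V E v \<longleftrightarrow> is_ordering V v \<and>
     (\<forall>k\<in>{1..card V}. card {(i,j) \<in> backedges V E v. i = k \<or> j = k} \<le> 1)"

end

theory Submission
  imports Defs
begin

text \<open>The in-neighbours of \<open>v\<^sub>k\<close> are the earlier vertices, except the heads of backedges out
  of \<open>v\<^sub>k\<close>, together with the tails of backedges into \<open>v\<^sub>k\<close>. Hence
  \<open>indegree (v\<^sub>k) + #(backedges out of v\<^sub>k) = k - 1 + #(backedges into v\<^sub>k)\<close> in any ordering
  of a tournament; in a matching ordering at most one of the two counts is nonzero and it is
  at most 1, which pins \<open>k\<close> down to \<open>b\<close>, \<open>b + 1\<close> or \<open>b + 2\<close>.\<close>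

definition back_in :: "'a set \<Rightarrow> ('a \<times> 'a) set \<Rightarrow> (nat \<Rightarrow> 'a) \<Rightarrow> nat \<Rightarrow> nat set" where
  "back_in V E v k = {j. (k, j) \<in> backedges V E v}"

definition back_out :: "'a set \<Rightarrow> ('a \<times> 'a) set \<Rightarrow> (nat \<Rightarrow> 'a) \<Rightarrow> nat \<Rightarrow> nat set" where
  "back_out V E v k = {i. (i, k) \<in> backedges V E v}"

lemma back_in_eq:
  "k \<ge> 1 \<Longrightarrow> back_in V E v k = {j. k < j \<and> j \<le> card V \<and> (v j, v k) \<in> E}"
  by (auto simp: back_in_def backedges_def)

lemma back_out_eq:
  "k \<le> card V \<Longrightarrow> back_out V E v k = {i. 1 \<le> i \<and> i < k \<and> (v k, v i) \<in> E}"
  by (auto simp: back_out_def backedges_def)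

lemma back_in_subset: "back_in V E v k \<subseteq> {k<..card V}"
  by (auto simp: back_in_def backedges_def)

lemma finite_back_in: "finite (back_in V E v k)"
  using finite_subset[OF back_in_subset] by simp

lemma back_out_subset: "back_out V E v k \<subseteq> {1..<k}"
  by (auto simp: back_out_def backedges_def)

lemma finite_back_out: "finite (back_out V E v k)"
  using finite_subset[OF back_out_subset] by simp

lemma is_head_of_backedge_iff: "is_head_of_backedge V E v k \<longleftrightarrow> card (back_in V E v k) \<noteq> 0"
proof -
  have "is_head_of_backedge V E v k \<longleftrightarrow> back_in V E v k \<noteq> {}"
    by (auto simp: is_head_of_backedge_def back_in_def)
  then show ?thesis
    by (simp add: finite_back_in)
qed

lemma is_tail_of_backedge_iff: "is_tail_of_backedge V E v k \<longleftrightarrow> card (back_out V E v k) \<noteq> 0"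
proof -
  have "is_tail_of_backedge V E v k \<longleftrightarrow> back_out V E v k \<noteq> {}"
    by (auto simp: is_tail_of_backedge_def back_out_def)
  then show ?thesis
    by (simp add: finite_back_out)
qed

lemma tournament_loop_free: "tournament V E \<Longrightarrow> (u, u) \<notin> E"
  unfolding tournament_def by blast

lemma tournament_edge_iff:
  "\<lbrakk>tournament V E; u \<in> V; w \<in> V; u \<noteq> w\<rbrakk> \<Longrightarrow> (u, w) \<in> E \<longleftrightarrow> (w, u) \<notin> E"
  unfolding tournament_def by blast

lemma indegree_eq_card_positions:
  assumes "is_ordering V v"
  shows "indegree V E x = card {i \<in> {1..card V}. (v i, x) \<in> E}"
proof -
  have bij: "bij_betw v {1..card V} V"
    using assms by (simp add: is_ordering_def)
  have "{u \<in> V. (u, x) \<in> E} = v ` {i \<in> {1..card V}. (v i, x) \<in> E}"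
    using Compr_image_eq[of v "{1..card V}" "\<lambda>u. (u, x) \<in> E"] bij_betw_imp_surj_on[OF bij]
    by simp
  moreover have "inj_on v {i \<in> {1..card V}. (v i, x) \<in> E}"
    using bij_betw_imp_inj_on[OF bij] by (rule inj_on_subset) blast
  ultimately show ?thesis
    by (simp add: indegree_def card_image)
qed

lemma in_positions_eq:
  assumes "tournament V E" and "is_ordering V v" and k: "k \<in> {1..card V}"
  shows "{i \<in> {1..card V}. (v i, v k) \<in> E} = ({1..<k} - back_out V E v k) \<union> back_in V E v k"
proof -
  have bij: "bij_betw v {1..card V} V"
    using assms(2) by (simp add: is_ordering_def)
  have vk: "v k \<in> V"
    using bij_betwE[OF bij] k by blast
  have earlier: "(v i, v k) \<in> E \<longleftrightarrow> (v k, v i) \<notin> E" if "1 \<le> i" "i < k" for i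
  proof -
    have i: "i \<in> {1..card V}"
      using that k by simp
    then have "v i \<noteq> v k"
      using inj_on_contraD[OF bij_betw_imp_inj_on[OF bij] _ i k] that(2) by simp
    moreover have "v i \<in> V"
      using bij_betwE[OF bij] i by blast
    ultimately show ?thesis
      using tournament_edge_iff[OF assms(1) _ vk] by blast
  qed
  show ?thesis
  proof (rule set_eqI)
    fix i
    consider "i < k" | "i = k" | "k < i"
      by linarith
    then show "i \<in> {i \<in> {1..card V}. (v i, v k) \<in> E} \<longleftrightarrow>
               i \<in> ({1..<k} - back_out V E v k) \<union> back_in V E v k"
      by cases (use k tournament_loop_free[OF assms(1)] earlier in \<open>auto simp: back_in_eq back_out_eq\<close>)
  qed
qed

lemma indegree_add_card_back_out:
  assumes "tournament V E" and "is_ordering V v" and k: "k \<in> {1..card V}"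
  shows "indegree V E (v k) + card (back_out V E v k) = (k - 1) + card (back_in V E v k)"
proof -
  have disjoint: "({1..<k} - back_out V E v k) \<inter> back_in V E v k = {}"
    using back_in_subset by fastforce
  have back_out_le: "card (back_out V E v k) \<le> k - 1"
    using card_mono[OF _ back_out_subset] by simp
  have "indegree V E (v k) = card (({1..<k} - back_out V E v k) \<union> back_in V E v k)"
    using indegree_eq_card_positions[OF assms(2)] in_positions_eq[OF assms] by simp
  also have "\<dots> = card ({1..<k} - back_out V E v k) + card (back_in V E v k)"
    using disjoint by (simp add: card_Un_disjoint finite_back_in)
  also have "\<dots> = (k - 1) - card (back_out V E v k) + card (back_in V E v k)"
    using card_Diff_subset[OF finite_back_out back_out_subset] by simp
  finally show ?thesis
    using back_out_le by simp
qed

lemma matching_card_back_in_add_back_out: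
  assumes "matching_ordering V E v" and "k \<in> {1..card V}"
  shows "card (back_in V E v k) + card (back_out V E v k) \<le> 1"
proof -
  have "{(i, j) \<in> backedges V E v. i = k \<or> j = k}
      = Pair k ` back_in V E v k \<union> (\<lambda>i. (i, k)) ` back_out V E v k"
    by (auto simp: back_in_def back_out_def)
  moreover have "Pair k ` back_in V E v k \<inter> (\<lambda>i. (i, k)) ` back_out V E v k = {}"
    by (auto simp: back_in_def back_out_def backedges_def)
  moreover have "card (Pair k ` back_in V E v k) = card (back_in V E v k)"
    by (simp add: card_image inj_on_def)
  moreover have "card ((\<lambda>i. (i, k)) ` back_out V E v k) = card (back_out V E v k)"
    by (simp add: card_image inj_on_def)
  ultimately have "card {(i, j) \<in> backedges V E v. i = k \<or> j = k}
      = card (back_in V E v k) + card (back_out V E v k)"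
    by (simp add: card_Un_disjoint finite_back_in finite_back_out)
  moreover have "card {(i, j) \<in> backedges V E v. i = k \<or> j = k} \<le> 1"
    using assms unfolding matching_ordering_def by blast
  ultimately show ?thesis
    by simp
qed

text \<open>\<open>h\<close> and \<open>t\<close> count the backedges into and out of \<open>v\<^sub>k\<close>.\<close>
lemma position_from_backedge_counts:
  fixes b k h t :: nat
  assumes "b + t = (k - 1) + h" and "h + t \<le> 1" and "1 \<le> k"
  shows "(k = b \<or> k = b + 1 \<or> k = b + 2) \<and> (k = b \<longleftrightarrow> h \<noteq> 0) \<and>
         (k = b + 2 \<longleftrightarrow> t \<noteq> 0) \<and> (k = b + 1 \<longleftrightarrow> h = 0 \<and> t = 0)"
  using assms by auto

theorem proposition5p1:
  fixes V :: "'a set" and E :: "('a \<times> 'a) set" and v :: "nat \<Rightarrow> 'a" and k b :: nat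
  assumes "tournament V E"
    and "matching_ordering V E v"
    and "k \<in> {1..card V}"
    and "b = indegree V E (v k)"
  shows "(k = b \<or> k = b + 1 \<or> k = b + 2) \<and>
         (k = b \<longleftrightarrow> is_head_of_backedge V E v k) \<and>
         (k = b + 2 \<longleftrightarrow> is_tail_of_backedge V E v k) \<and>
         (k = b + 1 \<longleftrightarrow> \<not> is_head_of_backedge V E v k \<and> \<not> is_tail_of_backedge V E v k)"
proof -
  have "is_ordering V v"
    using assms(2) by (simp add: matching_ordering_def)
  then have "b + card (back_out V E v k) = (k - 1) + card (back_in V E v k)"
    using assms indegree_add_card_back_out by blast
  moreover have "card (back_in V E v k) + card (back_out V E v k) \<le> 1"
    using assms(2,3) by (rule matching_card_back_in_add_back_out)
  moreover have "1 \<le> k"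
    using assms(3) by simp
  ultimately have "(k = b \<or> k = b + 1 \<or> k = b + 2) \<and>
      (k = b \<longleftrightarrow> card (back_in V E v k) \<noteq> 0) \<and>
      (k = b + 2 \<longleftrightarrow> card (back_out V E v k) \<noteq> 0) \<and>
      (k = b + 1 \<longleftrightarrow> card (back_in V E v k) = 0 \<and> card (back_out V E v k) = 0)"
    by (rule position_from_backedge_counts)
  then show ?thesis
    unfolding is_head_of_backedge_iff is_tail_of_backedge_iff not_not .
qed

end
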